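(* Let $(E,f)$ be a polymatroid that admits a tensor product $(E\times\{1,2,3\},g)$ with $U_{2,3}$. For $A_1,A_2,A_3\subseteq E$ put $s=f(A_1\cup A_2\cup A_3)$, $r_i=f(A_i)$ for $i=1,2,3$, and for $\{i,j,k\}=\{1,2,3\}$ put $s_i=f(A_j\cup A_k)$. Define \[ \alpha(A_1,A_2,A_3)=\min\{r_1+r_2+r_3,\ s_1+s_2+s_3-s\},\qquad \beta(A_1,A_2,A_3)=\max\{s_1+r_1,\ s_2+r_2,\ s_3+r_3\}. \] Then for every $A_1,A_2,A_3\subseteq E$, \[ \beta(A_1,A_2,A_3)\le g\big((A_1\times\{1\})\cup(A_2\times\{2\})\cup(A_3\times\{3\})\big)\le \alpha(A_1,A_2,A_3). \]
   Context: A polymatroid $(E,f)$ consists of a finite ground set $E$ and a function $f\colon 2^E\to\mathbb{R}$ with $f(\emptyset)=0$ that is monotone ($S\subseteq T\Rightarrow f(S)\le f(T)$) and submodular ($f(S)+f(T)\ge f(S\cup T)+f(S\cap T)$). The uniform matroid $U_{2,3}$ is the polymatroid on $\{1,2,3\}$ with rank function $r(T)=\min\{|T|,2\}$. A tensor product of polymatroids $(E_1,f_1)$ and $(E_2,f_2)$ is a polymatroid $(E_1\times E_2,g)$ such that $g(S\times T)=f_1(S)f_2(T)$ for all $S\subseteq E_1$, $T\subseteq E_2$. *)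

theory Defs
  imports Complex_Main
begin

definition polymatroid :: "'a set \<Rightarrow> ('a set \<Rightarrow> real) \<Rightarrow> bool" where
  "polymatroid E f \<longleftrightarrow> finite E \<and> f {} = 0 \<and>
     (\<forall>S T. S \<subseteq> T \<and> T \<subseteq> E \<longrightarrow> f S \<le> f T) \<and>
     (\<forall>S T. S \<subseteq> E \<and> T \<subseteq> E \<longrightarrow> f S + f T \<ge> f (S \<union> T) + f (S \<inter> T))"

definition U23_rank :: "nat set \<Rightarrow> real" where
  "U23_rank T = real (min (card T) 2)"

definition tensor_product ::
  "'a set \<Rightarrow> ('a set \<Rightarrow> real) \<Rightarrow> 'b set \<Rightarrow> ('b set \<Rightarrow> real) \<Rightarrow> (('a \<times> 'b) set \<Rightarrow> real) \<Rightarrow> bool" where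
  "tensor_product E1 f1 E2 f2 g \<longleftrightarrow> polymatroid (E1 \<times> E2) g \<and>
     (\<forall>S T. S \<subseteq> E1 \<and> T \<subseteq> E2 \<longrightarrow> g (S \<times> T) = f1 S * f2 T)"

end

theory Submission
  imports Defs
begin

(* Since U_{2,3} has rank 2, g (S \<times> {i,j,k}) = g (S \<times> {i,j}): any row S \<times> {k} is spanned by the
   rows S \<times> {i} and S \<times> {j}. Hence, next to a full row U \<times> {i}, two rows A \<times> {j} and B \<times> {k} with
   A, B \<subseteq> U can be merged into the single row (A \<union> B) \<times> {j} without changing g.
   With U = A1 \<union> A2 \<union> A3 and X = A1 \<times> {1} \<union> A2 \<times> {2} \<union> A3 \<times> {3}, submodularity for X and
   U \<times> {1} gives the lower bound s1 + r1; submodularity for the two supersets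
   U \<times> {3} \<union> A1 \<times> {1} \<union> A2 \<times> {2} and (A1 \<union> A3) \<times> {1} \<union> (A2 \<union> A3) \<times> {2} \<union> A3 \<times> {3} of X,
   whose union spans U \<times> {1,2,3}, gives the upper bound s1 + s2 + s3 - s; and r1 + r2 + r3
   is subadditivity. *)

lemma polymatroid_mono:
  "polymatroid G h \<Longrightarrow> S \<subseteq> T \<Longrightarrow> T \<subseteq> G \<Longrightarrow> h S \<le> h T"
  unfolding polymatroid_def by blast

lemma polymatroid_submod:
  "polymatroid G h \<Longrightarrow> S \<subseteq> G \<Longrightarrow> T \<subseteq> G \<Longrightarrow> h (S \<union> T) + h (S \<inter> T) \<le> h S + h T"
  unfolding polymatroid_def by blast

lemma polymatroid_subadd:
  assumes "polymatroid G h" "S \<subseteq> G" "T \<subseteq> G"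
  shows "h (S \<union> T) \<le> h S + h T"
proof -
  have "h {} \<le> h (S \<inter> T)"
    using assms by (intro polymatroid_mono) auto
  moreover have "h {} = 0"
    using assms(1) unfolding polymatroid_def by blast
  ultimately show ?thesis
    using polymatroid_submod[OF assms] by linarith
qed

lemma polymatroid_spanned_superset:
  assumes "polymatroid G h" "B \<subseteq> W" "W \<subseteq> G" "C \<subseteq> G" "h (B \<union> C) = h B"
  shows "h (W \<union> C) = h W"
proof -
  have "W \<union> (B \<union> C) = W \<union> C"
    using assms(2) by blast
  then have "h (W \<union> C) + h (W \<inter> (B \<union> C)) \<le> h W + h B"
    using polymatroid_submod[of G h W "B \<union> C"] assms by simp
  moreover have "h B \<le> h (W \<inter> (B \<union> C))"
    using assms by (intro polymatroid_mono) auto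
  moreover have "h W \<le> h (W \<union> C)"
    using assms by (intro polymatroid_mono) auto
  ultimately show ?thesis
    by linarith
qed

locale U23_tensor =
  fixes E :: "'a set" and f :: "'a set \<Rightarrow> real" and g :: "('a \<times> nat) set \<Rightarrow> real"
  assumes tensor: "tensor_product E f {1,2,3} U23_rank g"
begin

abbreviation I :: "nat set" where
  "I \<equiv> {1,2,3}"

lemma polymatroid_g: "polymatroid (E \<times> I) g"
  using tensor unfolding tensor_product_def by blast

lemma g_rows: "S \<subseteq> E \<Longrightarrow> K \<subseteq> I \<Longrightarrow> g (S \<times> K) = f S * real (min (card K) 2)"
  using tensor unfolding tensor_product_def U23_rank_def by blast

lemma g_row: "S \<subseteq> E \<Longrightarrow> i \<in> I \<Longrightarrow> g (S \<times> {i}) = f S"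
  using g_rows[of S "{i}"] by simp

lemma g_two_rows: "S \<subseteq> E \<Longrightarrow> i \<in> I \<Longrightarrow> j \<in> I \<Longrightarrow> i \<noteq> j \<Longrightarrow> g (S \<times> {i,j}) = 2 * f S"
  using g_rows[of S "{i,j}"] by simp

lemma g_all_rows: "S \<subseteq> E \<Longrightarrow> g (S \<times> I) = 2 * f S"
  using g_rows[of S I] by simp

lemma g_third_row_spanned:
  assumes "W \<subseteq> E \<times> I" "S \<subseteq> E" "S \<times> {i,j} \<subseteq> W"
    and "i \<in> I" "j \<in> I" "k \<in> I" "distinct [i, j, k]"
  shows "g (W \<union> S \<times> {k}) = g W"
proof (rule polymatroid_spanned_superset[OF polymatroid_g assms(3,1)])
  have "S \<times> {i,j} \<union> S \<times> {k} = S \<times> I"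
    using assms(4-7) by auto
  then show "g (S \<times> {i,j} \<union> S \<times> {k}) = g (S \<times> {i,j})"
    using assms g_all_rows g_two_rows by simp
qed (use assms in auto)

lemma g_merge_rows:
  assumes "A \<subseteq> U" "B \<subseteq> U" "U \<subseteq> E"
    and "i \<in> I" "j \<in> I" "k \<in> I" "distinct [i, j, k]"
  shows "g (U \<times> {i} \<union> A \<times> {j} \<union> B \<times> {k}) = g (U \<times> {i} \<union> (A \<union> B) \<times> {j})"
proof -
  define W where "W = U \<times> {i} \<union> A \<times> {j} \<union> B \<times> {k}"
  define V where "V = U \<times> {i} \<union> (A \<union> B) \<times> {j}"
  have "g W = g (W \<union> A \<times> {k})"
    using assms by (intro g_third_row_spanned[symmetric]) (auto simp: W_def)
  also have "\<dots> = g (W \<union> A \<times> {k} \<union> B \<times> {j})"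
    using assms by (intro g_third_row_spanned[symmetric, of _ _ i k]) (auto simp: W_def)
  also have "W \<union> A \<times> {k} \<union> B \<times> {j} = V \<union> (A \<union> B) \<times> {k}"
    by (auto simp: W_def V_def)
  also have "g \<dots> = g V"
    using assms by (intro g_third_row_spanned) (auto simp: V_def)
  finally show ?thesis
    by (simp add: W_def V_def)
qed

lemma g_nested_rows_ge:
  assumes "T \<subseteq> S" "S \<subseteq> E" "i \<in> I" "j \<in> I" "i \<noteq> j"
  shows "f S + f T \<le> g (S \<times> {i} \<union> T \<times> {j})"
proof -
  let ?Z = "S \<times> {i} \<union> T \<times> {j}"
  have "g (?Z \<union> S \<times> {j}) + g (?Z \<inter> S \<times> {j}) \<le> g ?Z + g (S \<times> {j})"
    using assms by (intro polymatroid_submod[OF polymatroid_g]) auto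
  moreover have "?Z \<union> S \<times> {j} = S \<times> {i,j}" "?Z \<inter> S \<times> {j} = T \<times> {j}"
    using assms by auto
  ultimately show ?thesis
    using assms g_row g_two_rows[of S i j] by (simp add: subset_trans[OF assms(1,2)])
qed

context
  fixes Ai Aj Ak :: "'a set" and i j k :: nat
  assumes A: "Ai \<subseteq> E" "Aj \<subseteq> E" "Ak \<subseteq> E"
    and I: "i \<in> I" "j \<in> I" "k \<in> I" "distinct [i, j, k]"
begin

lemma g_rows_ge: "f (Aj \<union> Ak) + f Ai \<le> g (Ai \<times> {i} \<union> Aj \<times> {j} \<union> Ak \<times> {k})"
proof -
  define U where "U = Ai \<union> Aj \<union> Ak"
  define X where "X = Ai \<times> {i} \<union> Aj \<times> {j} \<union> Ak \<times> {k}"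
  have "g (X \<union> U \<times> {i}) + g (X \<inter> U \<times> {i}) \<le> g X + g (U \<times> {i})"
    using A I by (intro polymatroid_submod[OF polymatroid_g]) (auto simp: X_def U_def)
  moreover have "X \<inter> U \<times> {i} = Ai \<times> {i}"
    using I by (auto simp: X_def U_def)
  moreover have "g (X \<union> U \<times> {i}) = g (U \<times> {i} \<union> (Aj \<union> Ak) \<times> {j})"
  proof -
    have "X \<union> U \<times> {i} = U \<times> {i} \<union> Aj \<times> {j} \<union> Ak \<times> {k}"
      by (auto simp: X_def U_def)
    moreover have "Aj \<subseteq> U" "Ak \<subseteq> U" "U \<subseteq> E"
      using A by (auto simp: U_def)
    ultimately show ?thesis
      using g_merge_rows[OF _ _ _ I] by simp
  qed
  moreover have "f U + f (Aj \<union> Ak) \<le> g (U \<times> {i} \<union> (Aj \<union> Ak) \<times> {j})"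
    using A I by (intro g_nested_rows_ge) (auto simp: U_def)
  ultimately show ?thesis
    using A I g_row by (simp add: X_def U_def)
qed

lemma g_rows_le_sum: "g (Ai \<times> {i} \<union> Aj \<times> {j} \<union> Ak \<times> {k}) \<le> f Ai + f Aj + f Ak"
proof -
  have "g (Ai \<times> {i} \<union> Aj \<times> {j} \<union> Ak \<times> {k}) \<le> g (Ai \<times> {i} \<union> Aj \<times> {j}) + g (Ak \<times> {k})"
    using A I by (intro polymatroid_subadd[OF polymatroid_g]) auto
  moreover have "g (Ai \<times> {i} \<union> Aj \<times> {j}) \<le> g (Ai \<times> {i}) + g (Aj \<times> {j})"
    using A I by (intro polymatroid_subadd[OF polymatroid_g]) auto
  ultimately show ?thesis
    using g_row[OF A(1) I(1)] g_row[OF A(2) I(2)] g_row[OF A(3) I(3)] by linarith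
qed

lemma g_rows_le:
  "g (Ai \<times> {i} \<union> Aj \<times> {j} \<union> Ak \<times> {k}) \<le>
     f (Aj \<union> Ak) + f (Ai \<union> Ak) + f (Ai \<union> Aj) - f (Ai \<union> Aj \<union> Ak)"
proof -
  define U where "U = Ai \<union> Aj \<union> Ak"
  define P where "P = U \<times> {k} \<union> Ai \<times> {i} \<union> Aj \<times> {j}"
  define W where "W = (Ai \<union> Ak) \<times> {i} \<union> (Aj \<union> Ak) \<times> {j}"
  define R where "R = W \<union> Ak \<times> {k}"
  have U: "U \<subseteq> E" "Ai \<subseteq> U" "Aj \<subseteq> U" "Ai \<union> Ak \<subseteq> U" "Aj \<union> Ak \<subseteq> U"
    using A by (auto simp: U_def)
  have I': "k \<in> I" "i \<in> I" "j \<in> I" "distinct [k, i, j]"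
    using I by auto
  have "g P = g (U \<times> {k} \<union> (Ai \<union> Aj) \<times> {i})"
    unfolding P_def using U by (intro g_merge_rows[OF _ _ _ I'])
  also have "\<dots> \<le> g (U \<times> {k}) + g ((Ai \<union> Aj) \<times> {i})"
    using A U I by (intro polymatroid_subadd[OF polymatroid_g]) auto
  finally have gP: "g P \<le> f U + f (Ai \<union> Aj)"
    using A U I g_row by simp
  have "g R = g W"
    unfolding R_def using A I by (intro g_third_row_spanned) (auto simp: W_def)
  also have "\<dots> \<le> g ((Ai \<union> Ak) \<times> {i}) + g ((Aj \<union> Ak) \<times> {j})"
    unfolding W_def using A I by (intro polymatroid_subadd[OF polymatroid_g]) auto
  finally have gR: "g R \<le> f (Ai \<union> Ak) + f (Aj \<union> Ak)"
    using A I g_row by simp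
  have "P \<union> R = U \<times> {k} \<union> (Ai \<union> Ak) \<times> {i} \<union> (Aj \<union> Ak) \<times> {j}"
    by (auto simp: P_def R_def W_def U_def)
  also have "g \<dots> = g (U \<times> {k} \<union> U \<times> {i})"
    using g_merge_rows[OF U(4,5,1) I'] by (simp add: U_def Un_ac)
  also have "U \<times> {k} \<union> U \<times> {i} = U \<times> {k,i}"
    by blast
  also have "g \<dots> = 2 * f U"
    using U I by (intro g_two_rows) auto
  finally have gPR: "g (P \<union> R) = 2 * f U" .
  have "g (P \<union> R) + g (P \<inter> R) \<le> g P + g R"
    using U A I by (intro polymatroid_submod[OF polymatroid_g]) (auto simp: P_def R_def W_def)
  moreover have "g (Ai \<times> {i} \<union> Aj \<times> {j} \<union> Ak \<times> {k}) \<le> g (P \<inter> R)"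
    using U A I by (intro polymatroid_mono[OF polymatroid_g]) (auto simp: P_def R_def W_def U_def)
  ultimately show ?thesis
    using gP gR gPR by (simp add: U_def)
qed

end

end

theorem proposition4p2:
  fixes E :: "'a set" and f :: "'a set \<Rightarrow> real" and g :: "('a \<times> nat) set \<Rightarrow> real"
    and A1 A2 A3 :: "'a set"
  assumes "polymatroid E f"
    and "tensor_product E f {1,2,3} U23_rank g"
    and "A1 \<subseteq> E" and "A2 \<subseteq> E" and "A3 \<subseteq> E"
  shows "let s = f (A1 \<union> A2 \<union> A3); r1 = f A1; r2 = f A2; r3 = f A3;
             s1 = f (A2 \<union> A3); s2 = f (A1 \<union> A3); s3 = f (A1 \<union> A2);
             \<alpha> = min (r1 + r2 + r3) (s1 + s2 + s3 - s);
             \<beta> = max (s1 + r1) (max (s2 + r2) (s3 + r3));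
             G = g ((A1 \<times> {1}) \<union> (A2 \<times> {2}) \<union> (A3 \<times> {3}))
         in \<beta> \<le> G \<and> G \<le> \<alpha>"
proof -
  interpret U23_tensor E f g
    using assms(2) by unfold_locales
  define X where "X = A1 \<times> {1} \<union> A2 \<times> {2} \<union> A3 \<times> {3::nat}"
  have "X = A2 \<times> {2} \<union> A1 \<times> {1} \<union> A3 \<times> {3}" "X = A3 \<times> {3} \<union> A1 \<times> {1} \<union> A2 \<times> {2}"
    by (auto simp: X_def)
  then have "f (A2 \<union> A3) + f A1 \<le> g X" "f (A1 \<union> A3) + f A2 \<le> g X" "f (A1 \<union> A2) + f A3 \<le> g X"
    using g_rows_ge[of A1 A2 A3 1 2 3] g_rows_ge[of A2 A1 A3 2 1 3] g_rows_ge[of A3 A1 A2 3 1 2]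
      assms(3-5) by (simp_all add: X_def)
  moreover have "g X \<le> f A1 + f A2 + f A3"
    using g_rows_le_sum[of A1 A2 A3 1 2 3] assms(3-5) by (simp add: X_def)
  moreover have "g X \<le> f (A2 \<union> A3) + f (A1 \<union> A3) + f (A1 \<union> A2) - f (A1 \<union> A2 \<union> A3)"
    using g_rows_le[of A1 A2 A3 1 2 3] assms(3-5) by (simp add: X_def)
  ultimately show ?thesis
    unfolding Let_def X_def[symmetric] by simp
qed

end
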